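(* Let $G$ be a non-bipartite $\ell$-regular graph. Assume the edge-connectivity of $G$ is $\ell$, and that the only edge cuts consisting of $\ell$ edges are the sets of $\ell$ edges incident to a single vertex. Then for any vertex cut $S$ of $G$, $|S| > c(G\setminus S)$. In particular, $t(K(n,k))>1$ for any $n\ge 2k+1$.
   Context: A vertex cut of a connected graph $G$ is a set $S$ of vertices whose removal disconnects $G$; $c(G\setminus S)$ denotes the number of connected components after deleting $S$. The toughness is $t(G)=\min_S |S|/c(G\setminus S)$ over all vertex cuts $S$. The Kneser graph $K(n,k)$ has as vertices the $k$-element subsets of $[n]$, two vertices being adjacent iff they are disjoint. *)

theory Defs
  imports Main "HOL-Library.Extended_Real"
begin

definition sgraph :: "'a set \<Rightarrow> 'a set set \<Rightarrow> bool" where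
  "sgraph V E \<longleftrightarrow> finite V \<and> (\<forall>e\<in>E. card e = 2 \<and> e \<subseteq> V)"

definition incident_edges :: "'a set set \<Rightarrow> 'a \<Rightarrow> 'a set set" where
  "incident_edges E v = {e\<in>E. v \<in> e}"

definition regular :: "'a set \<Rightarrow> 'a set set \<Rightarrow> nat \<Rightarrow> bool" where
  "regular V E l \<longleftrightarrow> (\<forall>v\<in>V. card (incident_edges E v) = l)"

definition bipartite :: "'a set \<Rightarrow> 'a set set \<Rightarrow> bool" where
  "bipartite V E \<longleftrightarrow> (\<exists>A B. A \<union> B = V \<and> A \<inter> B = {} \<and>
      (\<forall>e\<in>E. e \<inter> A \<noteq> {} \<and> e \<inter> B \<noteq> {}))"

definition conn_rel :: "'a set \<Rightarrow> 'a set set \<Rightarrow> ('a \<times> 'a) set" where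
  "conn_rel W E = {(u,v). u \<in> W \<and> v \<in> W \<and>
      (u,v) \<in> ({(x,y). {x,y} \<in> E \<and> x \<in> W \<and> y \<in> W})\<^sup>*}"

definition num_components :: "'a set \<Rightarrow> 'a set set \<Rightarrow> nat" where
  "num_components W E = card (W // conn_rel W E)"

definition vertex_cut :: "'a set \<Rightarrow> 'a set set \<Rightarrow> 'a set \<Rightarrow> bool" where
  "vertex_cut V E S \<longleftrightarrow> S \<subseteq> V \<and> num_components (V - S) E \<ge> 2"

definition edge_cut :: "'a set \<Rightarrow> 'a set set \<Rightarrow> 'a set set \<Rightarrow> bool" where
  "edge_cut V E F \<longleftrightarrow> F \<subseteq> E \<and> num_components V (E - F) \<ge> 2"

definition edge_connectivity :: "'a set \<Rightarrow> 'a set set \<Rightarrow> nat" where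
  "edge_connectivity V E = (INF F\<in>{F. edge_cut V E F}. card F)"

text \<open>Toughness (value \<infinity> if there is no vertex cut, e.g. complete graphs).\<close>
definition toughness :: "'a set \<Rightarrow> 'a set set \<Rightarrow> ereal" where
  "toughness V E = (INF S\<in>{S. vertex_cut V E S}.
      ereal (real (card S) / real (num_components (V - S) E)))"

definition kneser_verts :: "nat \<Rightarrow> nat \<Rightarrow> nat set set" where
  "kneser_verts n k = {A. A \<subseteq> {1..n} \<and> card A = k}"

definition kneser_edges :: "nat \<Rightarrow> nat \<Rightarrow> nat set set set" where
  "kneser_edges n k = {{A,B} | A B. A \<in> kneser_verts n k \<and> B \<in> kneser_verts n k
      \<and> A \<noteq> B \<and> A \<inter> B = {}}"

end

theory Submission
  imports Defs
begin

text \<open>Let \<open>S\<close> be a vertex cut of the \<open>l\<close>-regular graph \<open>G\<close>, with \<open>c\<close> components \<open>C\<^sub>i\<close>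
  of \<open>G - S\<close>. The edge boundaries of the \<open>C\<^sub>i\<close> are disjoint, consist of edges ending in \<open>S\<close>, and
  each has at least \<open>l\<close> edges; since the vertices of \<open>S\<close> have only \<open>l |S|\<close> edge-ends in total,
  \<open>l c \<le> l |S|\<close>. Equality would force every component boundary to be a minimum edge cut, hence
  (by hypothesis) the star of a vertex, so every component is a single vertex, and \<open>S\<close> to be
  independent; but then \<open>S\<close> and its complement bipartition \<open>G\<close>.

  For the Kneser graph with \<open>k \<ge> 2\<close> the hypothesis on minimum edge cuts follows from
  arc-transitivity by Mader's atom argument: submodularity of the edge boundary shows that a
  smallest side of a minimum nontrivial cut cannot cross its images under automorphisms, while
  arc-transitivity produces an image that does cross it. For \<open>k \<le> 1\<close> the Kneser graph is
  complete and has no vertex cut.\<close>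

section \<open>Edge boundaries\<close>

definition edge_boundary :: "'a set set \<Rightarrow> 'a set \<Rightarrow> 'a set set" where
  "edge_boundary E X = {e\<in>E. e \<inter> X \<noteq> {} \<and> \<not> e \<subseteq> X}"

lemma sgraph_edgeE:
  assumes "sgraph V E" "e \<in> E"
  obtains x y where "e = {x,y}" "x \<noteq> y" "x \<in> V" "y \<in> V"
proof -
  from assms have "card e = 2" "e \<subseteq> V" unfolding sgraph_def by auto
  then show ?thesis using that by (auto simp: card_2_iff)
qed

lemma sgraph_finite_edges: "sgraph V E \<Longrightarrow> finite E"
  unfolding sgraph_def by (meson PowI finite_Pow_iff finite_subset subsetI)

lemma sgraph_finite_incident_edges: "sgraph V E \<Longrightarrow> finite (incident_edges E v)"
  unfolding incident_edges_def by (simp add: sgraph_finite_edges)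

lemma edge_boundary_subset: "edge_boundary E X \<subseteq> E"
  unfolding edge_boundary_def by auto

lemma sgraph_finite_edge_boundary: "sgraph V E \<Longrightarrow> finite (edge_boundary E X)"
  using sgraph_finite_edges edge_boundary_subset finite_subset by metis

lemma doubleton_in_edge_boundary_iff:
  "x \<noteq> y \<Longrightarrow> {x,y} \<in> edge_boundary E X \<longleftrightarrow> {x,y} \<in> E \<and> (x \<in> X \<longleftrightarrow> y \<notin> X)"
  unfolding edge_boundary_def by auto

lemma edge_boundaryI: "{x,y} \<in> E \<Longrightarrow> x \<in> X \<Longrightarrow> y \<notin> X \<Longrightarrow> {x,y} \<in> edge_boundary E X"
  unfolding edge_boundary_def by auto

lemma edge_boundaryE:
  assumes "sgraph V E" "e \<in> edge_boundary E X"
  obtains x y where "e = {x,y}" "{x,y} \<in> E" "x \<in> X" "y \<in> V" "y \<notin> X"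
proof -
  have "e \<in> E" using assms(2) edge_boundary_subset by blast
  then obtain x y where "e = {x,y}" "x \<noteq> y" "x \<in> V" "y \<in> V"
    using sgraph_edgeE[OF assms(1)] by metis
  with assms(2) show ?thesis
    using that[of x y] that[of y x] by (auto simp: doubleton_in_edge_boundary_iff insert_commute)
qed

lemma edge_boundary_Diff:
  assumes "sgraph V E" shows "edge_boundary E (V - X) = edge_boundary E X"
  using assms unfolding edge_boundary_def sgraph_def by blast

lemma edge_boundary_singleton:
  assumes "sgraph V E" shows "edge_boundary E {v} = incident_edges E v"
proof -
  have "\<not> e \<subseteq> {v}" if "e \<in> E" for e
    using assms that card_mono[of "{v}" e] unfolding sgraph_def by fastforce
  then show ?thesis unfolding edge_boundary_def incident_edges_def by auto
qed

lemma card_edge_boundary_Int_Un: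
  assumes "sgraph V E"
  shows "card (edge_boundary E (X \<inter> Y)) + card (edge_boundary E (X \<union> Y))
    \<le> card (edge_boundary E X) + card (edge_boundary E Y)"
proof -
  let ?ind = "\<lambda>Z e. if e \<in> edge_boundary E Z then 1 else 0 :: nat"
  have card_eq: "card (edge_boundary E Z) = (\<Sum>e\<in>E. ?ind Z e)" for Z
    using sgraph_finite_edges[OF assms] edge_boundary_subset[of E Z]
    by (simp add: sum.If_cases Int_absorb1)
  have "?ind (X \<inter> Y) e + ?ind (X \<union> Y) e \<le> ?ind X e + ?ind Y e" if e: "e \<in> E" for e
  proof -
    obtain x y where "e = {x,y}" "x \<noteq> y" using sgraph_edgeE[OF assms e] by metis
    then show ?thesis using e by (auto simp: doubleton_in_edge_boundary_iff)
  qed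
  then show ?thesis unfolding card_eq sum.distrib[symmetric] by (intro sum_mono)
qed

lemma card_edge_boundary_Diff_Diff:
  assumes "sgraph V E" "X \<subseteq> V" "Y \<subseteq> V"
  shows "card (edge_boundary E (X - Y)) + card (edge_boundary E (Y - X))
    \<le> card (edge_boundary E X) + card (edge_boundary E Y)"
proof -
  have "X - Y = X \<inter> (V - Y)" "Y - X = V - (X \<union> (V - Y))" using assms(2,3) by auto
  then show ?thesis
    using card_edge_boundary_Int_Un[OF assms(1), of X "V - Y"] by (simp add: edge_boundary_Diff[OF assms(1)])
qed

section \<open>Connected components\<close>

lemma equiv_conn_rel: "equiv W (conn_rel W E)"
proof (rule equivI)
  let ?A = "{(x,y). {x,y} \<in> E \<and> x \<in> W \<and> y \<in> W}"
  have "?A\<inverse> = ?A" by (auto simp: insert_commute)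
  then have "(y,x) \<in> ?A\<^sup>*" if "(x,y) \<in> ?A\<^sup>*" for x y
    using rtrancl_converseI[OF that] by simp
  then show "sym (conn_rel W E)" unfolding conn_rel_def by (intro symI) auto
qed (auto simp: conn_rel_def refl_on_def trans_def)

lemma conn_rel_edge: "{x,y} \<in> E \<Longrightarrow> x \<in> W \<Longrightarrow> y \<in> W \<Longrightarrow> (x,y) \<in> conn_rel W E"
  unfolding conn_rel_def by auto

lemma conn_rel_closed:
  assumes "(x,y) \<in> conn_rel W E" "x \<in> X"
    and "\<And>u v. {u,v} \<in> E \<Longrightarrow> u \<in> X \<Longrightarrow> v \<in> W \<Longrightarrow> v \<in> X"
  shows "y \<in> X"
proof -
  have "(x,y) \<in> {(u,v). {u,v} \<in> E \<and> u \<in> W \<and> v \<in> W}\<^sup>*"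
    using assms(1) unfolding conn_rel_def by auto
  then show ?thesis using assms(2,3) by (induction rule: rtrancl_induct) auto
qed

lemma component_edge_closed:
  assumes "C \<in> W // conn_rel W E" "x \<in> C" "y \<in> W" "{x,y} \<in> E"
  shows "y \<in> C"
proof -
  obtain a where a: "C = conn_rel W E `` {a}" using assms(1) by (rule quotientE)
  have "(a,x) \<in> conn_rel W E" using a assms(2) by auto
  moreover have "(x,y) \<in> conn_rel W E"
    using calculation assms(3,4) by (intro conn_rel_edge) (auto simp: conn_rel_def)
  ultimately show ?thesis using a equiv_conn_rel[of W E] by (auto elim: equivE transE)
qed

lemma finite_components: "finite W \<Longrightarrow> finite (W // conn_rel W E)"
  by (rule finite_quotient) (auto simp: conn_rel_def)

lemma num_components_ge_2:
  assumes "finite W" "x \<in> X" "y \<in> W - X" "X \<subseteq> W"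
    and "\<And>u v. {u,v} \<in> E \<Longrightarrow> u \<in> X \<Longrightarrow> v \<in> W \<Longrightarrow> v \<in> X"
  shows "num_components W E \<ge> 2"
proof -
  let ?R = "conn_rel W E"
  have "?R `` {x} \<in> W // ?R" "?R `` {y} \<in> W // ?R" using assms(2-4) by (auto intro: quotientI)
  moreover have "y \<in> ?R `` {y}" "y \<notin> ?R `` {x}"
    using assms conn_rel_closed[of x y W E X] by (auto simp: conn_rel_def)
  moreover have "finite (W // ?R)" using assms(1) by (rule finite_components)
  ultimately have "card {?R `` {x}, ?R `` {y}} \<le> num_components W E"
    unfolding num_components_def by (intro card_mono) auto
  moreover have "?R `` {x} \<noteq> ?R `` {y}" using \<open>y \<in> ?R `` {y}\<close> \<open>y \<notin> ?R `` {x}\<close> by blast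
  ultimately show ?thesis by simp
qed

lemma edge_cut_edge_boundary:
  assumes "sgraph V E" "X \<subseteq> V" "X \<noteq> {}" "X \<noteq> V"
  shows "edge_cut V E (edge_boundary E X)"
proof -
  obtain x y where xy: "x \<in> X" "y \<in> V - X" using assms(2-4) by blast
  moreover have "v \<in> X" if "{u,v} \<in> E - edge_boundary E X" "u \<in> X" for u v
    using that edge_boundaryI[of u v E X] by auto
  ultimately have "num_components V (E - edge_boundary E X) \<ge> 2"
    using assms(1,2) xy unfolding sgraph_def by (intro num_components_ge_2[of V x X y]) auto
  then show ?thesis unfolding edge_cut_def using edge_boundary_subset by blast
qed

lemma num_components_le_1_if_complete:
  assumes "\<And>x y. x \<in> W \<Longrightarrow> y \<in> W \<Longrightarrow> x \<noteq> y \<Longrightarrow> {x,y} \<in> E"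
  shows "num_components W E \<le> 1"
proof -
  have "(x,y) \<in> conn_rel W E" if "x \<in> W" "y \<in> W" for x y
    using that assms conn_rel_edge[of x y E W] equiv_conn_rel[of W E]
    by (cases "x = y") (auto elim: equivE refl_onD)
  then have "W // conn_rel W E \<subseteq> {W}"
    by (auto elim!: quotientE simp: conn_rel_def)
  then show ?thesis unfolding num_components_def using card_mono[of "{W}"] by fastforce
qed

definition common_neighbour :: "'a set set \<Rightarrow> ('a \<times> 'a) set" where
  "common_neighbour E = {(x,y). \<exists>z. {x,z} \<in> E \<and> {y,z} \<in> E}"

lemma rtrancl_invariant:
  assumes "(a,b) \<in> R\<^sup>*" "\<And>x y. (x,y) \<in> R \<Longrightarrow> f x = f y"
  shows "f a = f b"
  using assms by (induction rule: rtrancl_induct) auto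

lemma not_bipartite_if_edge_in_common_neighbour_rtrancl:
  assumes "{a,b} \<in> E" "(a,b) \<in> (common_neighbour E)\<^sup>*"
  shows "\<not> bipartite V E"
proof
  assume "bipartite V E"
  then obtain A B where AB: "A \<inter> B = {}" "\<forall>e\<in>E. e \<inter> A \<noteq> {} \<and> e \<inter> B \<noteq> {}"
    unfolding bipartite_def by blast
  have side: "(x \<in> A) \<noteq> (y \<in> A)" if "{x,y} \<in> E" for x y
    using AB(1) bspec[OF AB(2) that] by auto
  have "(x \<in> A) = (y \<in> A)" if xy: "(x,y) \<in> common_neighbour E" for x y
  proof -
    obtain z where "{x,z} \<in> E" "{y,z} \<in> E" using xy unfolding common_neighbour_def by blast
    then show ?thesis using side by metis
  qed
  then have "(a \<in> A) = (b \<in> A)" by (rule rtrancl_invariant[OF assms(2)])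
  with side[OF assms(1)] show False by contradiction
qed

lemma edge_boundary_nonempty_if_common_neighbour_rtrancl:
  assumes "x \<in> X" "y \<notin> X" "(x,y) \<in> (common_neighbour E)\<^sup>*"
  shows "edge_boundary E X \<noteq> {}"
proof
  assume empty: "edge_boundary E X = {}"
  have closed: "(u \<in> X) = (v \<in> X)" if "{u,v} \<in> E" for u v
    using edge_boundaryI[of u v E X] edge_boundaryI[of v u E X] that empty insert_commute[of u v "{}"] by auto
  have "(u \<in> X) = (v \<in> X)" if uv: "(u,v) \<in> common_neighbour E" for u v
  proof -
    obtain z where "{u,z} \<in> E" "{v,z} \<in> E" using uv unfolding common_neighbour_def by blast
    then show ?thesis using closed by metis
  qed
  then have "(x \<in> X) = (y \<in> X)" by (rule rtrancl_invariant[OF assms(3)])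
  with assms(1,2) show False by simp
qed

section \<open>Vertex cuts in super edge-connected graphs\<close>

definition nontrivial_side :: "'a set \<Rightarrow> 'a set \<Rightarrow> bool" where
  "nontrivial_side V X \<longleftrightarrow> X \<subseteq> V \<and> 2 \<le> card X \<and> 2 \<le> card (V - X)"

text \<open>For the degree \<open>d\<close> of a regular graph this is super edge-connectivity: the
  edge-connectivity is \<open>d\<close> and every minimum edge cut is the star of a vertex.\<close>

definition super_edge_connected :: "'a set \<Rightarrow> 'a set set \<Rightarrow> nat \<Rightarrow> bool" where
  "super_edge_connected V E d \<longleftrightarrow>
    (\<forall>X. nontrivial_side V X \<longrightarrow> d < card (edge_boundary E X))"

lemma card_edge_boundary_ge_if_ge_on_nontrivial:
  assumes "sgraph V E" "regular V E d" "m \<le> d"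
    and "\<And>Y. nontrivial_side V Y \<Longrightarrow> m \<le> card (edge_boundary E Y)"
    and "X \<subseteq> V" "X \<noteq> {}" "X \<noteq> V"
  shows "m \<le> card (edge_boundary E X)"
proof -
  have "finite V" using assms(1) unfolding sgraph_def by simp
  then have "finite X" using assms(5) by (rule finite_subset[rotated])
  moreover have "V - X \<noteq> {}" using assms(5,7) by blast
  ultimately have "0 < card X" "0 < card (V - X)"
    using \<open>finite V\<close> assms(6) by (simp_all add: card_gt_0_iff)
  then consider "card X = 1" | "card (V - X) = 1" | "2 \<le> card X" "2 \<le> card (V - X)"
    by linarith
  then show ?thesis
  proof cases
    case 1
    then obtain v where "X = {v}" by (rule card_1_singletonE)
    then show ?thesis
      using assms(2,3,5) edge_boundary_singleton[OF assms(1)] unfolding regular_def by auto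
  next
    case 2
    then obtain v where v: "V - X = {v}" by (rule card_1_singletonE)
    then have "edge_boundary E X = incident_edges E v"
      using edge_boundary_Diff[OF assms(1), of X] edge_boundary_singleton[OF assms(1)] by simp
    then show ?thesis using assms(2,3) v unfolding regular_def by auto
  next
    case 3
    then show ?thesis using assms(4,5) unfolding nontrivial_side_def by blast
  qed
qed

lemma super_edge_connected_card_edge_boundary_ge:
  assumes "sgraph V E" "regular V E d" "super_edge_connected V E d"
    and "X \<subseteq> V" "X \<noteq> {}" "X \<noteq> V"
  shows "d \<le> card (edge_boundary E X)"
proof (rule card_edge_boundary_ge_if_ge_on_nontrivial[OF assms(1,2) order.refl _ assms(4-6)])
  fix Y assume "nontrivial_side V Y"
  then have "d < card (edge_boundary E Y)" using assms(3) unfolding super_edge_connected_def by blast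
  then show "d \<le> card (edge_boundary E Y)" by simp
qed

lemma regular_degree_pos_if_not_bipartite:
  assumes "sgraph V E" "regular V E d" "\<not> bipartite V E"
  shows "0 < d"
proof (rule ccontr)
  assume "\<not> 0 < d"
  have "E = {}"
  proof (rule ccontr)
    assume "E \<noteq> {}"
    then obtain e where "e \<in> E" by blast
    then obtain x y where "e = {x,y}" "x \<in> V" by (rule sgraph_edgeE[OF assms(1)])
    with \<open>e \<in> E\<close> have "{x,y} \<in> incident_edges E x" unfolding incident_edges_def by auto
    moreover have "card (incident_edges E x) = 0"
      using \<open>\<not> 0 < d\<close> assms(2) \<open>x \<in> V\<close> unfolding regular_def by simp
    ultimately show False using sgraph_finite_incident_edges[OF assms(1), of x] by auto
  qed
  then have "bipartite V E" unfolding bipartite_def by (intro exI[of _ V] exI[of _ "{}"]) simp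
  with assms(3) show False by contradiction
qed

lemma bipartite_if_trivial_components:
  assumes "sgraph V E" "\<forall>e\<in>E. \<not> e \<subseteq> S"
    and "\<forall>C \<in> (V - S) // conn_rel (V - S) E. card C \<le> 1"
  shows "bipartite V E"
proof -
  have "e \<inter> (V \<inter> S) \<noteq> {} \<and> e \<inter> (V - S) \<noteq> {}" if eE: "e \<in> E" for e
  proof -
    obtain x y where e: "e = {x,y}" "x \<noteq> y" "x \<in> V" "y \<in> V" by (rule sgraph_edgeE[OF assms(1) eE])
    have "\<not> (x \<in> V - S \<and> y \<in> V - S)"
    proof
      assume xy: "x \<in> V - S \<and> y \<in> V - S"
      let ?C = "conn_rel (V - S) E `` {x}"
      have "?C \<in> (V - S) // conn_rel (V - S) E" using xy by (intro quotientI) simp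
      then have "card ?C \<le> 1" using assms(3) by blast
      have "{x,y} \<subseteq> ?C" using xy eE e(1) conn_rel_edge[of x y E "V - S"] by (auto simp: conn_rel_def)
      moreover have "finite ?C"
      proof (rule finite_subset)
        show "?C \<subseteq> V" by (auto simp: conn_rel_def)
        show "finite V" using assms(1) unfolding sgraph_def by simp
      qed
      ultimately have "card {x,y} \<le> card ?C" by (intro card_mono)
      moreover have "card {x,y} = 2" using e(2) by simp
      ultimately show False using \<open>card ?C \<le> 1\<close> by linarith
    qed
    moreover have "\<not> (x \<in> S \<and> y \<in> S)" using bspec[OF assms(2) eE] unfolding e(1) by simp
    ultimately show ?thesis using e(3,4) unfolding e(1) by auto
  qed
  then show ?thesis unfolding bipartite_def by (intro exI[of _ "V \<inter> S"] exI[of _ "V - S"]) blast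
qed

lemma vertex_cut_componentD:
  assumes "vertex_cut V E S" "C \<in> (V - S) // conn_rel (V - S) E"
  shows "C \<subseteq> V - S" "C \<noteq> {}" "C \<noteq> V"
proof -
  let ?Q = "(V - S) // conn_rel (V - S) E"
  have equiv: "equiv (V - S) (conn_rel (V - S) E)" by (rule equiv_conn_rel)
  show sub: "C \<subseteq> V - S" using assms(2) in_quotient_imp_subset[OF equiv] by blast
  show "C \<noteq> {}" using assms(2) in_quotient_imp_non_empty[OF equiv] by blast
  have "\<not> ?Q \<subseteq> {C}"
  proof
    assume "?Q \<subseteq> {C}"
    then have "card ?Q \<le> card {C}" by (intro card_mono) auto
    with assms(1) show False unfolding vertex_cut_def num_components_def by simp
  qed
  then obtain C' where C': "C' \<in> ?Q" "C' \<noteq> C" by blast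
  then have "C \<inter> C' = {}" using quotient_disj[OF equiv] assms(2) by blast
  moreover have "C' \<noteq> {}" "C' \<subseteq> V"
    using C'(1) in_quotient_imp_non_empty[OF equiv] in_quotient_imp_subset[OF equiv] by blast+
  ultimately show "C \<noteq> V" by blast
qed

lemma component_edge_boundaryE:
  assumes "sgraph V E" "C \<in> (V - S) // conn_rel (V - S) E" "e \<in> edge_boundary E C"
  obtains x y where "e = {x,y}" "x \<in> C" "y \<in> S"
proof -
  obtain x y where xy: "e = {x,y}" "{x,y} \<in> E" "x \<in> C" "y \<in> V" "y \<notin> C"
    by (rule edge_boundaryE[OF assms(1,3)])
  then have "y \<in> S" using component_edge_closed[OF assms(2)] by blast
  with xy that show ?thesis by blast
qed

lemma component_edge_boundaries_disjoint:
  assumes "sgraph V E"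
    and C: "C \<in> (V - S) // conn_rel (V - S) E" and C': "C' \<in> (V - S) // conn_rel (V - S) E"
    and "C \<noteq> C'"
  shows "edge_boundary E C \<inter> edge_boundary E C' = {}"
proof (rule equals0I)
  have equiv: "equiv (V - S) (conn_rel (V - S) E)" by (rule equiv_conn_rel)
  fix e assume "e \<in> edge_boundary E C \<inter> edge_boundary E C'"
  then have e: "e \<in> edge_boundary E C" "e \<in> edge_boundary E C'" by auto
  obtain x y where "e = {x,y}" "x \<in> C" "y \<in> S" by (rule component_edge_boundaryE[OF assms(1) C e(1)])
  moreover obtain x' y' where "e = {x',y'}" "x' \<in> C'" "y' \<in> S"
    by (rule component_edge_boundaryE[OF assms(1) C' e(2)])
  moreover have "C \<subseteq> V - S" "C' \<subseteq> V - S" using C C' in_quotient_imp_subset[OF equiv] by blast+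
  ultimately have "x \<in> C \<inter> C'" by auto
  then show False using quotient_disj[OF equiv C C'] assms(4) by blast
qed

lemma component_edge_boundary_subset:
  assumes "sgraph V E" "C \<in> (V - S) // conn_rel (V - S) E"
  shows "edge_boundary E C \<subseteq> edge_boundary E S"
proof
  fix e assume e: "e \<in> edge_boundary E C"
  obtain x y where xy: "e = {x,y}" "x \<in> C" "y \<in> S" by (rule component_edge_boundaryE[OF assms e])
  have "C \<subseteq> V - S" using assms(2) in_quotient_imp_subset[OF equiv_conn_rel] by blast
  with xy have "x \<notin> S" by blast
  moreover have "{y,x} \<in> E" using e edge_boundary_subset xy(1) by (auto simp: insert_commute)
  ultimately have "{y,x} \<in> edge_boundary E S" using xy(3) by (intro edge_boundaryI)
  with xy(1) show "e \<in> edge_boundary E S" by (simp add: insert_commute)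
qed

text \<open>Counting edge-ends at \<open>S\<close>: an edge inside \<open>S\<close> has two of them.\<close>

lemma card_edge_boundary_add_inner_edges_le:
  assumes g: "sgraph V E" and r: "regular V E d" and S: "S \<subseteq> V"
  shows "card (edge_boundary E S) + card {e\<in>E. e \<subseteq> S} \<le> d * card S"
proof -
  have fin: "finite V" "finite E" using g sgraph_finite_edges unfolding sgraph_def by auto
  have sub: "edge_boundary E S \<union> {e\<in>E. e \<subseteq> S} \<subseteq> (\<Union>s\<in>S. incident_edges E s)"
  proof
    fix e assume e: "e \<in> edge_boundary E S \<union> {e\<in>E. e \<subseteq> S}"
    then have "e \<in> E" using edge_boundary_subset by blast
    then obtain x y where "e = {x,y}" by (rule sgraph_edgeE[OF g])
    with e \<open>e \<in> E\<close> show "e \<in> (\<Union>s\<in>S. incident_edges E s)"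
      unfolding edge_boundary_def incident_edges_def by blast
  qed
  have "card (edge_boundary E S) + card {e\<in>E. e \<subseteq> S} = card (edge_boundary E S \<union> {e\<in>E. e \<subseteq> S})"
    using sgraph_finite_edge_boundary[OF g] fin(2)
    by (intro card_Un_disjoint[symmetric]) (auto simp: edge_boundary_def)
  also have "\<dots> \<le> card (\<Union>s\<in>S. incident_edges E s)"
  proof (rule card_mono[OF _ sub])
    show "finite (\<Union>s\<in>S. incident_edges E s)"
      using fin(2) by (rule finite_subset[rotated]) (auto simp: incident_edges_def)
  qed
  also have "\<dots> \<le> (\<Sum>s\<in>S. card (incident_edges E s))"
    using fin(1) S by (intro card_UN_le) (rule finite_subset)
  also have "\<dots> = (\<Sum>s\<in>S. d)" using r S unfolding regular_def by (intro sum.cong) auto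
  finally show ?thesis by (simp add: mult.commute)
qed

lemma sum_card_edge_boundary_components_le:
  assumes g: "sgraph V E" and "regular V E d" "S \<subseteq> V"
  shows "(\<Sum>C \<in> (V - S) // conn_rel (V - S) E. card (edge_boundary E C)) + card {e\<in>E. e \<subseteq> S}
    \<le> d * card S"
proof -
  let ?Q = "(V - S) // conn_rel (V - S) E"
  have "finite ?Q" using g unfolding sgraph_def by (simp add: finite_components)
  then have "(\<Sum>C\<in>?Q. card (edge_boundary E C)) = card (\<Union>C\<in>?Q. edge_boundary E C)"
    using component_edge_boundaries_disjoint[OF g] sgraph_finite_edge_boundary[OF g]
    by (intro card_UN_disjoint[symmetric]) auto
  also have "\<dots> \<le> card (edge_boundary E S)"
    using component_edge_boundary_subset[OF g] sgraph_finite_edge_boundary[OF g]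
    by (intro card_mono) auto
  finally show ?thesis using card_edge_boundary_add_inner_edges_le[OF assms] by linarith
qed

lemma card_edge_boundary_big_component_gt:
  assumes g: "sgraph V E" and sec: "super_edge_connected V E d"
    and cut: "vertex_cut V E S" "2 \<le> card S"
    and C: "C \<in> (V - S) // conn_rel (V - S) E" "2 \<le> card C"
  shows "d < card (edge_boundary E C)"
proof -
  have "C \<subseteq> V - S" by (rule vertex_cut_componentD(1)[OF cut(1) C(1)])
  moreover have "finite V" using g unfolding sgraph_def by simp
  ultimately have "card S \<le> card (V - C)" using cut(1) unfolding vertex_cut_def by (intro card_mono) auto
  with \<open>C \<subseteq> V - S\<close> cut(2) C(2) have "nontrivial_side V C" unfolding nontrivial_side_def by auto
  with sec show ?thesis unfolding super_edge_connected_def by blast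
qed

lemma card_components_less_card_vertex_cut:
  assumes g: "sgraph V E" and r: "regular V E d" and nb: "\<not> bipartite V E"
    and sec: "super_edge_connected V E d" and cut: "vertex_cut V E S"
  shows "num_components (V - S) E < card S"
proof -
  define Q where "Q = (V - S) // conn_rel (V - S) E"
  define inner where "inner = card {e\<in>E. e \<subseteq> S}"
  have SV: "S \<subseteq> V" and Q2: "2 \<le> card Q"
    using cut unfolding vertex_cut_def num_components_def Q_def by auto
  have finQ: "finite Q" using g unfolding sgraph_def Q_def by (simp add: finite_components)
  have bd_ge: "d \<le> card (edge_boundary E C)" if "C \<in> Q" for C
    using super_edge_connected_card_edge_boundary_ge[OF g r sec] vertex_cut_componentD[OF cut that[unfolded Q_def]]
    by blast
  have sum: "(\<Sum>C\<in>Q. card (edge_boundary E C)) + inner \<le> d * card S"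
    using sum_card_edge_boundary_components_le[OF g r SV] unfolding Q_def inner_def .
  have lower: "d * card Q \<le> (\<Sum>C\<in>Q. card (edge_boundary E C))"
    using sum_mono[of Q "\<lambda>_. d", OF bd_ge] by (simp add: mult.commute)
  with sum have "d * card Q \<le> d * card S" by linarith
  then have "card Q \<le> card S" using regular_degree_pos_if_not_bipartite[OF g r nb] by simp
  with Q2 have S2: "2 \<le> card S" by linarith
  have "d * card Q + 1 \<le> (\<Sum>C\<in>Q. card (edge_boundary E C)) + inner"
  proof (cases "\<exists>C\<in>Q. 2 \<le> card C")
    case True
    then obtain C0 where C0: "C0 \<in> Q" "2 \<le> card C0" by blast
    then have "d < card (edge_boundary E C0)"
      using card_edge_boundary_big_component_gt[OF g sec cut S2] unfolding Q_def by blast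
    then have "(\<Sum>C\<in>Q. d + (if C = C0 then 1 else 0)) \<le> (\<Sum>C\<in>Q. card (edge_boundary E C))"
      using bd_ge by (intro sum_mono) auto
    moreover have "(\<Sum>C\<in>Q. d + (if C = C0 then 1 else 0)) = d * card Q + 1"
      using C0(1) finQ by (simp add: sum.distrib mult.commute)
    ultimately show ?thesis by linarith
  next
    case False
    then have "\<forall>C\<in>(V - S) // conn_rel (V - S) E. card C \<le> 1" unfolding Q_def by auto
    then have "{e\<in>E. e \<subseteq> S} \<noteq> {}" using bipartite_if_trivial_components[OF g] nb by blast
    then have "1 \<le> inner" unfolding inner_def using sgraph_finite_edges[OF g] by (simp add: Suc_le_eq card_gt_0_iff)
    with lower show ?thesis by linarith
  qed
  with sum have "d * card Q < d * card S" by linarith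
  then show ?thesis unfolding num_components_def Q_def by simp
qed

lemma toughness_gt_1:
  assumes "finite V" and large: "\<And>S. vertex_cut V E S \<Longrightarrow> num_components (V - S) E < card S"
  shows "1 < toughness V E"
proof (cases "{S. vertex_cut V E S} = {}")
  case True
  then have "toughness V E = \<infinity>" unfolding toughness_def True by (simp add: top_ereal_def)
  then show ?thesis by simp
next
  case False
  have "{S. vertex_cut V E S} \<subseteq> Pow V" unfolding vertex_cut_def by blast
  then have "finite {S. vertex_cut V E S}" using assms(1) by (simp add: finite_subset)
  moreover have "1 < ereal (real (card S) / real (num_components (V - S) E))" if "vertex_cut V E S" for S
    using large[OF that] that unfolding vertex_cut_def by simp
  ultimately show ?thesis unfolding toughness_def using False by (simp add: finite_less_Inf_iff)
qed

lemma edge_connectivity_le_card: "edge_cut V E F \<Longrightarrow> edge_connectivity V E \<le> card F"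
  unfolding edge_connectivity_def by (rule cINF_lower) auto

lemma edge_boundary_Diff_star_center:
  assumes g: "sgraph V E" and "v \<in> Y" and star: "edge_boundary E Y = incident_edges E v"
  shows "edge_boundary E (Y - {v}) = {}"
proof (rule equals0I)
  fix e assume "e \<in> edge_boundary E (Y - {v})"
  then obtain x y where e: "e = {x,y}" "{x,y} \<in> E" "x \<in> Y - {v}" "y \<notin> Y - {v}"
    by (rule edge_boundaryE[OF g])
  show False
  proof (cases "y = v")
    case True
    then have "e \<in> edge_boundary E Y" using star e unfolding incident_edges_def by auto
    then show False using e \<open>v \<in> Y\<close> True unfolding edge_boundary_def by auto
  next
    case False
    then have "e \<in> edge_boundary E Y" using e by (auto intro: edge_boundaryI)
    then show False using star e False unfolding incident_edges_def by auto
  qed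
qed

text \<open>If a nontrivial side \<open>X\<close> had only \<open>l\<close> boundary edges, they would form the star of a
  vertex \<open>v\<close>; removing \<open>v\<close> from the side containing it leaves a nonempty proper set with no
  boundary edges at all.\<close>

lemma super_edge_connected_if_min_edge_cuts_trivial:
  assumes g: "sgraph V E" and r: "regular V E l" and nb: "\<not> bipartite V E"
    and ec: "edge_connectivity V E = l"
    and triv: "\<forall>F. edge_cut V E F \<and> card F = l \<longrightarrow> (\<exists>v\<in>V. F = incident_edges E v)"
  shows "super_edge_connected V E l"
  unfolding super_edge_connected_def
proof (intro allI impI)
  have lower: "l \<le> card (edge_boundary E X)" if "X \<subseteq> V" "X \<noteq> {}" "X \<noteq> V" for X
    using edge_connectivity_le_card[OF edge_cut_edge_boundary[OF g that]] ec by simp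
  fix X assume "nontrivial_side V X"
  then have X: "X \<subseteq> V" "2 \<le> card X" "2 \<le> card (V - X)" "X \<noteq> {}" "X \<noteq> V"
    unfolding nontrivial_side_def by auto
  show "l < card (edge_boundary E X)"
  proof (rule ccontr)
    assume "\<not> l < card (edge_boundary E X)"
    with lower[OF X(1,4,5)] have "card (edge_boundary E X) = l" by linarith
    then obtain v where v: "v \<in> V" "edge_boundary E X = incident_edges E v"
      using triv edge_cut_edge_boundary[OF g X(1,4,5)] by blast
    obtain Y where Y: "Y \<subseteq> V" "2 \<le> card Y" "v \<in> Y" "edge_boundary E Y = incident_edges E v"
    proof (cases "v \<in> X")
      case True
      show ?thesis by (rule that) (use X v True in auto)
    next
      case False
      show ?thesis by (rule that[of "V - X"]) (use X v False edge_boundary_Diff[OF g, of X] in auto)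
    qed
    have "Y - {v} \<noteq> {}"
    proof
      assume "Y - {v} = {}"
      then have "card Y \<le> card {v}" by (intro card_mono) auto
      with Y(2) show False by simp
    qed
    moreover have "Y - {v} \<subseteq> V" "Y - {v} \<noteq> V" using Y(1) v(1) by auto
    ultimately have "l \<le> 0" using lower[of "Y - {v}"] edge_boundary_Diff_star_center[OF g Y(3,4)] by simp
    then show False using regular_degree_pos_if_not_bipartite[OF g r nb] by simp
  qed
qed

section \<open>Arc-transitive graphs are super edge-connected\<close>

definition graph_automorphism :: "'a set \<Rightarrow> 'a set set \<Rightarrow> ('a \<Rightarrow> 'a) \<Rightarrow> bool" where
  "graph_automorphism V E \<phi> \<longleftrightarrow>
    bij_betw \<phi> V V \<and> (\<forall>x\<in>V. \<forall>y\<in>V. {\<phi> x, \<phi> y} \<in> E \<longleftrightarrow> {x,y} \<in> E)"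

definition arc_transitive :: "'a set \<Rightarrow> 'a set set \<Rightarrow> bool" where
  "arc_transitive V E \<longleftrightarrow>
    (\<forall>u v a b. {u,v} \<in> E \<longrightarrow> {a,b} \<in> E \<longrightarrow> (\<exists>\<phi>. graph_automorphism V E \<phi> \<and> \<phi> u = a \<and> \<phi> v = b))"

lemma edge_boundary_image_automorphism:
  assumes g: "sgraph V E" and aut: "graph_automorphism V E \<phi>" and X: "X \<subseteq> V"
  shows "edge_boundary E (\<phi> ` X) = image \<phi> ` edge_boundary E X"
proof -
  have inj: "inj_on \<phi> V" and surj: "\<phi> ` V = V"
    and adj: "\<And>x y. x \<in> V \<Longrightarrow> y \<in> V \<Longrightarrow> {\<phi> x, \<phi> y} \<in> E \<longleftrightarrow> {x,y} \<in> E"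
    using aut unfolding graph_automorphism_def bij_betw_def by auto
  have out: "\<phi> y \<notin> \<phi> ` X \<longleftrightarrow> y \<notin> X" if "y \<in> V" for y
    using inj X that by (auto dest: inj_onD)
  show ?thesis
  proof (intro equalityI subsetI)
    fix e assume "e \<in> edge_boundary E (\<phi> ` X)"
    then obtain p q where pq: "e = {p,q}" "{p,q} \<in> E" "p \<in> \<phi> ` X" "q \<in> V" "q \<notin> \<phi> ` X"
      by (rule edge_boundaryE[OF g])
    obtain x y where xy: "x \<in> X" "p = \<phi> x" "y \<in> V" "q = \<phi> y" using pq(3,4) surj by blast
    then have "{x,y} \<in> edge_boundary E X"
      using pq adj[of x y] out[of y] X by (intro edge_boundaryI) auto
    then show "e \<in> image \<phi> ` edge_boundary E X" using pq(1) xy by (intro image_eqI[of _ _ "{x,y}"]) auto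
  next
    fix e assume "e \<in> image \<phi> ` edge_boundary E X"
    then obtain e0 where e0: "e0 \<in> edge_boundary E X" "e = \<phi> ` e0" by blast
    obtain x y where xy: "e0 = {x,y}" "{x,y} \<in> E" "x \<in> X" "y \<in> V" "y \<notin> X"
      by (rule edge_boundaryE[OF g e0(1)])
    then have "{\<phi> x, \<phi> y} \<in> edge_boundary E (\<phi> ` X)"
      using adj[of x y] out[of y] X by (intro edge_boundaryI) auto
    then show "e \<in> edge_boundary E (\<phi> ` X)" using e0(2) xy(1) by simp
  qed
qed

lemma card_edge_boundary_image_automorphism:
  assumes g: "sgraph V E" and aut: "graph_automorphism V E \<phi>" and X: "X \<subseteq> V"
  shows "card (edge_boundary E (\<phi> ` X)) = card (edge_boundary E X)"
proof -
  have "inj_on \<phi> V" using aut unfolding graph_automorphism_def bij_betw_def by simp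
  moreover have "edge_boundary E X \<subseteq> Pow V"
    using g edge_boundary_subset[of E X] unfolding sgraph_def by blast
  ultimately have "inj_on (image \<phi>) (edge_boundary E X)"
    using inj_on_image_Pow inj_on_subset by blast
  then show ?thesis unfolding edge_boundary_image_automorphism[OF assms] by (rule card_image)
qed

lemma card_incident_edges_Un_ge:
  assumes g: "sgraph V E" and r: "regular V E d" and "p \<in> V" "q \<in> V" "p \<noteq> q"
  shows "2 * d - 2 \<le> card ((incident_edges E p \<union> incident_edges E q) - {{p,q}})"
proof -
  let ?P = "incident_edges E p" and ?Q = "incident_edges E q"
  have fin: "finite ?P" "finite ?Q" using sgraph_finite_incident_edges[OF g] by auto
  have "?P \<inter> ?Q \<subseteq> {{p,q}}"
  proof
    fix e assume e: "e \<in> ?P \<inter> ?Q"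
    then obtain x y where "e = {x,y}" "x \<noteq> y"
      using sgraph_edgeE[OF g] unfolding incident_edges_def by blast
    with e assms(5) show "e \<in> {{p,q}}" unfolding incident_edges_def by auto
  qed
  then have "card (?P \<inter> ?Q) \<le> 1" using card_mono[of "{{p,q}}"] by simp
  moreover have "card ?P + card ?Q = card (?P \<union> ?Q) + card (?P \<inter> ?Q)" by (rule card_Un_Int[OF fin])
  moreover have "card ?P = d" "card ?Q = d" using r assms(3,4) unfolding regular_def by auto
  moreover have "card (?P \<union> ?Q) - 1 \<le> card ((?P \<union> ?Q) - {{p,q}})"
    by (simp add: card_Diff_singleton_if)
  ultimately show ?thesis by linarith
qed

lemma card_edge_boundary_ge_isolated_pair:
  assumes g: "sgraph V E" and r: "regular V E d" and X: "X \<subseteq> V" "p \<in> X" "q \<in> X" "p \<noteq> q"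
    and isolated: "\<And>z. z \<in> X - {p,q} \<Longrightarrow> {p,z} \<notin> E \<and> {q,z} \<notin> E"
  shows "2 * d - 2 \<le> card (edge_boundary E X)"
proof -
  have "(incident_edges E p \<union> incident_edges E q) - {{p,q}} \<subseteq> edge_boundary E X"
  proof
    fix e assume e: "e \<in> (incident_edges E p \<union> incident_edges E q) - {{p,q}}"
    then have "e \<in> E" unfolding incident_edges_def by blast
    then obtain x y where xy: "e = {x,y}" "x \<noteq> y" by (rule sgraph_edgeE[OF g])
    obtain c z where cz: "c \<in> {p,q}" "e = {c,z}" "z \<noteq> p" "z \<noteq> q"
      using e xy unfolding incident_edges_def by (auto simp: doubleton_eq_iff)
    then have "z \<notin> X" using isolated[of z] \<open>e \<in> E\<close> by auto
    then show "e \<in> edge_boundary E X" using cz \<open>e \<in> E\<close> X by (auto intro: edge_boundaryI)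
  qed
  then have "card ((incident_edges E p \<union> incident_edges E q) - {{p,q}}) \<le> card (edge_boundary E X)"
    by (rule card_mono[OF sgraph_finite_edge_boundary[OF g]])
  moreover have "2 * d - 2 \<le> card ((incident_edges E p \<union> incident_edges E q) - {{p,q}})"
    using X by (intro card_incident_edges_Un_ge[OF g r]) auto
  ultimately show ?thesis by linarith
qed

lemma card_edge_boundary_uncross:
  assumes g: "sgraph V E" and XY: "X \<subseteq> V" "Y \<subseteq> V" "X \<noteq> {}" "Y - X \<noteq> {}" "X \<union> Y \<noteq> V"
    and lb: "\<And>Z. Z \<subseteq> V \<Longrightarrow> Z \<noteq> {} \<Longrightarrow> Z \<noteq> V \<Longrightarrow> \<mu> \<le> card (edge_boundary E Z)"
    and bX: "card (edge_boundary E X) \<le> \<mu>" and bY: "card (edge_boundary E Y) \<le> \<mu>"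
  shows "card (edge_boundary E (X \<inter> Y)) \<le> \<mu>" "card (edge_boundary E (X - Y)) \<le> \<mu>"
proof -
  have "\<mu> \<le> card (edge_boundary E (X \<union> Y))" using XY by (intro lb) auto
  then show "card (edge_boundary E (X \<inter> Y)) \<le> \<mu>"
    using card_edge_boundary_Int_Un[OF g, of X Y] bX bY by linarith
  have "\<mu> \<le> card (edge_boundary E (Y - X))" using XY by (intro lb) auto
  then show "card (edge_boundary E (X - Y)) \<le> \<mu>"
    using card_edge_boundary_Diff_Diff[OF g XY(1,2)] bX bY by linarith
qed

lemma small_edge_boundary_has_inner_edge:
  assumes g: "sgraph V E" and r: "regular V E d" and X: "X \<subseteq> V" "2 \<le> card X"
    and small: "card (edge_boundary E X) < 2 * d - 2"
  shows "\<exists>a b. {a,b} \<in> E \<and> a \<in> X \<and> b \<in> X \<and> a \<noteq> b"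
proof (rule ccontr)
  assume none: "\<not> ?thesis"
  have "finite X" using g X(1) finite_subset unfolding sgraph_def by blast
  moreover have "\<not> card X \<le> Suc 0" using X(2) by simp
  ultimately obtain p q where pq: "p \<in> X" "q \<in> X" "p \<noteq> q" using card_le_Suc0_iff_eq by blast
  have "{p,z} \<notin> E \<and> {q,z} \<notin> E" if z: "z \<in> X - {p,q}" for z
  proof -
    have "z \<in> X" "z \<noteq> p" "z \<noteq> q" using z by auto
    then show ?thesis using none pq(1,2) by blast
  qed
  then have "2 * d - 2 \<le> card (edge_boundary E X)"
    by (intro card_edge_boundary_ge_isolated_pair[OF g r X(1) pq])
  with small show False by linarith
qed

lemma small_edge_boundary_card_ge_3:
  assumes g: "sgraph V E" and r: "regular V E d" and X: "X \<subseteq> V" "2 \<le> card X"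
    and small: "card (edge_boundary E X) < 2 * d - 2"
  shows "3 \<le> card X"
proof (rule ccontr)
  assume "\<not> 3 \<le> card X"
  obtain a b where ab: "{a,b} \<in> E" "a \<in> X" "b \<in> X" "a \<noteq> b"
    using small_edge_boundary_has_inner_edge[OF assms] by blast
  have "finite X" using g X(1) finite_subset unfolding sgraph_def by blast
  moreover have "card {a,b} = card X" using X(2) ab(4) \<open>\<not> 3 \<le> card X\<close> by simp
  ultimately have "{a,b} = X" using ab(2,3) by (intro card_subset_eq) auto
  then have "2 * d - 2 \<le> card (edge_boundary E X)"
    by (intro card_edge_boundary_ge_isolated_pair[OF g r X(1) ab(2,3,4)]) force
  with small show False by linarith
qed

definition edge_atom :: "'a set \<Rightarrow> 'a set set \<Rightarrow> 'a set \<Rightarrow> bool" where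
  "edge_atom V E X \<longleftrightarrow> nontrivial_side V X \<and>
    (\<forall>Y. nontrivial_side V Y \<longrightarrow> card (edge_boundary E X) \<le> card (edge_boundary E Y) \<and>
      (card (edge_boundary E Y) = card (edge_boundary E X) \<longrightarrow> card X \<le> card Y))"

lemma edge_atom_exists:
  assumes "nontrivial_side V X0"
  obtains X where "edge_atom V E X" "card (edge_boundary E X) \<le> card (edge_boundary E X0)"
proof -
  obtain X1 where X1: "nontrivial_side V X1"
    and X1_min: "\<forall>Y. nontrivial_side V Y \<longrightarrow> card (edge_boundary E X1) \<le> card (edge_boundary E Y)"
    using ex_has_least_nat[of "nontrivial_side V" X0 "\<lambda>X. card (edge_boundary E X)"] assms by blast
  obtain X where X: "nontrivial_side V X \<and> card (edge_boundary E X) = card (edge_boundary E X1)"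
    and X_min: "\<forall>Y. nontrivial_side V Y \<and> card (edge_boundary E Y) = card (edge_boundary E X1)
      \<longrightarrow> card X \<le> card Y"
    using ex_has_least_nat[of "\<lambda>X. nontrivial_side V X \<and> card (edge_boundary E X) = card (edge_boundary E X1)"
        X1 card] X1 by blast
  have "edge_atom V E X" unfolding edge_atom_def using X X1_min X_min by simp
  moreover have "card (edge_boundary E X) \<le> card (edge_boundary E X0)" using X X1_min assms by simp
  ultimately show ?thesis by (rule that)
qed

lemma edge_atom_no_smaller:
  assumes "finite V" "edge_atom V E X"
    and Z: "Z \<subset> X" "2 \<le> card Z" "card (edge_boundary E Z) \<le> card (edge_boundary E X)"
  shows False
proof -
  have X: "X \<subseteq> V" "2 \<le> card (V - X)" using assms(2) unfolding edge_atom_def nontrivial_side_def by auto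
  have "card (V - X) \<le> card (V - Z)" using Z(1) assms(1) by (intro card_mono) auto
  with X Z(1,2) have "nontrivial_side V Z" unfolding nontrivial_side_def by auto
  with assms(2) Z(3) have "card X \<le> card Z" unfolding edge_atom_def by (auto simp: le_antisym)
  moreover have "card Z < card X" using Z(1) assms(1) X(1) by (intro psubset_card_mono) (auto intro: finite_subset)
  ultimately show False by linarith
qed

lemma edge_atom_card_le_complement:
  assumes "sgraph V E" "edge_atom V E X"
  shows "card X \<le> card (V - X)"
proof -
  have "X \<subseteq> V" using assms(2) unfolding edge_atom_def nontrivial_side_def by simp
  then have "nontrivial_side V (V - X)"
    using assms(2) unfolding edge_atom_def nontrivial_side_def by (simp add: Diff_Diff_Int Int_absorb1)
  then show ?thesis using assms(2) edge_boundary_Diff[OF assms(1), of X] unfolding edge_atom_def by simp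
qed

text \<open>Such a \<open>Y\<close> is itself an atom, so this is a form of Mader's lemma that distinct atoms
  are disjoint.\<close>

lemma edge_atom_no_crossing:
  assumes g: "sgraph V E" and r: "regular V E d" and atom: "edge_atom V E X"
    and Xd: "card (edge_boundary E X) \<le> d" and X3: "3 \<le> card X"
    and Y: "Y \<subseteq> V" "card Y = card X" "card (edge_boundary E Y) = card (edge_boundary E X)"
    and cross: "X \<inter> Y \<noteq> {}" "X - Y \<noteq> {}"
  shows False
proof -
  define \<mu> where "\<mu> = card (edge_boundary E X)"
  have finV: "finite V" using g unfolding sgraph_def by simp
  have X: "X \<subseteq> V" "2 \<le> card (V - X)" "X \<noteq> {}"
    using atom X3 unfolding edge_atom_def nontrivial_side_def by auto
  have finX: "finite X" and finY: "finite Y" using finV X(1) Y(1) finite_subset by auto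
  have \<mu>_le: "\<mu> \<le> card (edge_boundary E Z)" if "Z \<subseteq> V" "Z \<noteq> {}" "Z \<noteq> V" for Z
    using card_edge_boundary_ge_if_ge_on_nontrivial[OF g r Xd _ that] atom
    unfolding \<mu>_def edge_atom_def by blast
  have "Y - X \<noteq> {}"
  proof
    assume "Y - X = {}"
    then have "Y = X" using Y(2) finX by (intro card_subset_eq) auto
    with cross(2) show False by simp
  qed
  moreover have "X \<union> Y \<noteq> V"
  proof
    assume "X \<union> Y = V"
    have "card V = card X + card (V - X)" using card_Diff_subset[OF finX X(1)] card_mono[OF finV X(1)] by simp
    moreover have "card V + card (X \<inter> Y) = card X + card Y"
      using card_Un_Int[OF finX finY] \<open>X \<union> Y = V\<close> by simp
    moreover have "1 \<le> card (X \<inter> Y)" using cross(1) finX by (simp add: Suc_le_eq card_gt_0_iff)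
    moreover have "card X \<le> card (V - X)" by (rule edge_atom_card_le_complement[OF g atom])
    ultimately show False using Y(2) by linarith
  qed
  ultimately have bd: "card (edge_boundary E (X \<inter> Y)) \<le> \<mu>" "card (edge_boundary E (X - Y)) \<le> \<mu>"
    using card_edge_boundary_uncross[OF g X(1) Y(1) X(3) _ _ \<mu>_le] Y(3) unfolding \<mu>_def by auto
  have sub: "X \<inter> Y \<subset> X" "X - Y \<subset> X" using cross by auto
  have "card X = card (X \<inter> Y) + card (X - Y)" using finX by (rule card_Int_Diff)
  then have "2 \<le> card (X \<inter> Y) \<or> 2 \<le> card (X - Y)" using X3 by linarith
  then show False
    using edge_atom_no_smaller[OF finV atom sub(1) _ bd(1)[unfolded \<mu>_def]]
      edge_atom_no_smaller[OF finV atom sub(2) _ bd(2)[unfolded \<mu>_def]] by blast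
qed

text \<open>An atom \<open>X\<close> with at most \<open>d\<close> boundary edges contains an edge \<open>ab\<close>; an automorphism
  taking a boundary edge \<open>uv\<close> (with \<open>u \<in> X\<close>) to \<open>ab\<close> yields a translate of \<open>X\<close> that contains
  \<open>a\<close> but not \<open>b\<close> and so crosses \<open>X\<close>.\<close>

lemma super_edge_connected_if_arc_transitive:
  assumes g: "sgraph V E" and r: "regular V E d" and d3: "3 \<le> d"
    and conn: "\<And>X. X \<subseteq> V \<Longrightarrow> X \<noteq> {} \<Longrightarrow> X \<noteq> V \<Longrightarrow> edge_boundary E X \<noteq> {}"
    and arc: "arc_transitive V E"
  shows "super_edge_connected V E d"
proof (rule ccontr)
  assume "\<not> super_edge_connected V E d"
  then obtain X0 where "nontrivial_side V X0" "card (edge_boundary E X0) \<le> d"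
    unfolding super_edge_connected_def by (auto simp: not_less)
  then obtain X where atom: "edge_atom V E X" and Xd: "card (edge_boundary E X) \<le> d"
    by (metis edge_atom_exists le_trans)
  have X: "X \<subseteq> V" "2 \<le> card X" "2 \<le> card (V - X)"
    using atom unfolding edge_atom_def nontrivial_side_def by auto
  have small: "card (edge_boundary E X) < 2 * d - 2" using Xd d3 by linarith
  obtain a b where ab: "{a,b} \<in> E" "a \<in> X" "b \<in> X" "a \<noteq> b"
    using small_edge_boundary_has_inner_edge[OF g r X(1,2) small] by blast
  have X3: "3 \<le> card X" by (rule small_edge_boundary_card_ge_3[OF g r X(1,2) small])
  have "X \<noteq> {}" "X \<noteq> V" using X by auto
  then obtain e where "e \<in> edge_boundary E X" using conn[OF X(1)] by blast
  then obtain u v where uv: "{u,v} \<in> E" "u \<in> X" "v \<in> V" "v \<notin> X"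
    by (rule edge_boundaryE[OF g])
  obtain \<phi> where aut: "graph_automorphism V E \<phi>" and \<phi>: "\<phi> u = a" "\<phi> v = b"
    using arc uv(1) ab(1) unfolding arc_transitive_def by blast
  have inj: "inj_on \<phi> V" and surj: "\<phi> ` V = V"
    using aut unfolding graph_automorphism_def bij_betw_def by auto
  show False
  proof (rule edge_atom_no_crossing[OF g r atom Xd X3])
    show "\<phi> ` X \<subseteq> V" using X(1) surj by blast
    show "card (\<phi> ` X) = card X" using inj X(1) by (intro card_image) (rule inj_on_subset)
    show "card (edge_boundary E (\<phi> ` X)) = card (edge_boundary E X)"
      by (rule card_edge_boundary_image_automorphism[OF g aut X(1)])
    show "X \<inter> \<phi> ` X \<noteq> {}" using \<phi>(1) uv(2) ab(2) by blast
    have "b \<notin> \<phi> ` X"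
    proof
      assume "b \<in> \<phi> ` X"
      then obtain z where "z \<in> X" "\<phi> z = \<phi> v" using \<phi>(2) by auto
      then have "z = v" using inj X(1) uv(3) by (auto dest: inj_onD)
      with \<open>z \<in> X\<close> uv(4) show False by simp
    qed
    then show "X - \<phi> ` X \<noteq> {}" using ab(3) by blast
  qed
qed

section \<open>Kneser graphs\<close>

lemma kneser_verts_finite: "finite (kneser_verts n k)"
  unfolding kneser_verts_def by (rule finite_subset[of _ "Pow {1..n}"]) auto

lemma kneser_vert_finite: "A \<in> kneser_verts n k \<Longrightarrow> finite A"
  unfolding kneser_verts_def using finite_subset[of A "{1..n}"] by simp

lemma kneser_edge_iff:
  assumes "A \<in> kneser_verts n k" "B \<in> kneser_verts n k"
  shows "{A,B} \<in> kneser_edges n k \<longleftrightarrow> A \<noteq> B \<and> A \<inter> B = {}"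
proof
  assume "{A,B} \<in> kneser_edges n k"
  then obtain A' B' where "{A,B} = {A',B'}" "A' \<noteq> B'" "A' \<inter> B' = {}"
    unfolding kneser_edges_def by auto
  then show "A \<noteq> B \<and> A \<inter> B = {}" by (auto simp: doubleton_eq_iff)
next
  assume "A \<noteq> B \<and> A \<inter> B = {}"
  with assms show "{A,B} \<in> kneser_edges n k" unfolding kneser_edges_def by auto
qed

lemma sgraph_kneser: "sgraph (kneser_verts n k) (kneser_edges n k)"
  unfolding sgraph_def
proof (intro conjI ballI kneser_verts_finite)
  fix e assume "e \<in> kneser_edges n k"
  then obtain A B where "e = {A,B}" "A \<in> kneser_verts n k" "B \<in> kneser_verts n k" "A \<noteq> B"
    unfolding kneser_edges_def by auto
  then show "card e = 2" "e \<subseteq> kneser_verts n k" by auto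
qed

lemma kneser_edge_verts:
  assumes "{A,B} \<in> kneser_edges n k"
  shows "A \<in> kneser_verts n k" "B \<in> kneser_verts n k"
  using assms sgraph_kneser[of n k] unfolding sgraph_def by auto

lemma regular_kneser:
  assumes "1 \<le> k"
  shows "regular (kneser_verts n k) (kneser_edges n k) ((n - k) choose k)"
  unfolding regular_def
proof
  fix A assume A: "A \<in> kneser_verts n k"
  let ?N = "{B. B \<subseteq> {1..n} - A \<and> card B = k}"
  have "A \<noteq> {}" using A assms unfolding kneser_verts_def by auto
  have "incident_edges (kneser_edges n k) A = (\<lambda>B. {A,B}) ` ?N"
  proof (intro equalityI subsetI)
    fix e assume "e \<in> incident_edges (kneser_edges n k) A"
    then obtain A1 B1 where e: "e = {A1,B1}" "A \<in> e" and AB1: "A1 \<in> kneser_verts n k"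
      "B1 \<in> kneser_verts n k" "A1 \<inter> B1 = {}"
      unfolding incident_edges_def kneser_edges_def by blast
    show "e \<in> (\<lambda>B. {A,B}) ` ?N"
    proof (cases "A = A1")
      case True
      then show ?thesis using e AB1 by (intro image_eqI[of _ _ B1]) (auto simp: kneser_verts_def)
    next
      case False
      then have "A = B1" using e by auto
      then show ?thesis using e AB1 by (intro image_eqI[of _ _ A1]) (auto simp: kneser_verts_def)
    qed
  next
    fix e assume "e \<in> (\<lambda>B. {A,B}) ` ?N"
    then obtain B where B: "e = {A,B}" "B \<subseteq> {1..n} - A" "card B = k" by auto
    then have "B \<in> kneser_verts n k" "A \<inter> B = {}" unfolding kneser_verts_def by auto
    then show "e \<in> incident_edges (kneser_edges n k) A"
      using kneser_edge_iff[OF A] B(1) \<open>A \<noteq> {}\<close> unfolding incident_edges_def by auto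
  qed
  moreover have "inj_on (\<lambda>B. {A,B}) ?N" by (rule inj_onI) (auto simp: doubleton_eq_iff)
  moreover have "card ({1..n} - A) = n - k"
    using A kneser_vert_finite[OF A] unfolding kneser_verts_def by (simp add: card_Diff_subset)
  ultimately show "card (incident_edges (kneser_edges n k) A) = (n - k) choose k"
    by (simp add: card_image n_subsets)
qed

lemma kneser_degree_ge_3:
  assumes "2 \<le> k" "2 * k + 1 \<le> n"
  shows "3 \<le> (n - k) choose k"
proof -
  have "n - k \<le> (n - k) choose k" using assms by (intro upper_le_binomial) auto
  then show ?thesis using assms by linarith
qed

lemma kneser_edge_if_k_le_1:
  assumes "k \<le> 1" "A \<in> kneser_verts n k" "B \<in> kneser_verts n k" "A \<noteq> B"
  shows "{A,B} \<in> kneser_edges n k"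
proof -
  have "card A \<le> Suc 0" "card B \<le> Suc 0" using assms(1-3) unfolding kneser_verts_def by auto
  then have A1: "\<forall>x\<in>A. \<forall>y\<in>A. x = y" and B1: "\<forall>x\<in>B. \<forall>y\<in>B. x = y"
    using card_le_Suc0_iff_eq[OF kneser_vert_finite[OF assms(2)]]
      card_le_Suc0_iff_eq[OF kneser_vert_finite[OF assms(3)]] by simp_all
  have "A \<inter> B = {}"
  proof (rule equals0I)
    fix x assume "x \<in> A \<inter> B"
    then have "A = {x}" "B = {x}" using A1 B1 by auto
    with assms(4) show False by simp
  qed
  then show ?thesis using kneser_edge_iff[OF assms(2,3)] assms(4) by simp
qed

text \<open>Exchanging an element of \<open>A - B\<close> for one of \<open>B - A\<close> moves \<open>A\<close> one step towards \<open>B\<close>;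
  the old and the new set are both adjacent to any \<open>k\<close>-set avoiding \<open>A\<close> and the new element,
  and such a set exists because \<open>n \<ge> 2k + 1\<close>.\<close>

lemma kneser_common_neighbour_rtrancl:
  assumes "2 * k + 1 \<le> n" "A \<in> kneser_verts n k" "B \<in> kneser_verts n k"
  shows "(A,B) \<in> (common_neighbour (kneser_edges n k))\<^sup>*"
  using assms(2)
proof (induction "card (A - B)" arbitrary: A)
  case 0
  then have "A \<subseteq> B" using kneser_vert_finite by auto
  moreover have "card A = card B" using 0(2) assms(3) unfolding kneser_verts_def by simp
  ultimately have "A = B" using card_subset_eq[OF kneser_vert_finite[OF assms(3)]] by blast
  then show ?case by simp
next
  case (Suc m)
  have fin: "finite A" "finite B" using Suc.prems assms(3) kneser_vert_finite by auto
  have A: "A \<subseteq> {1..n}" "card A = k" and B: "B \<subseteq> {1..n}" "card B = k"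
    using Suc.prems assms(3) unfolding kneser_verts_def by auto
  have "A - B \<noteq> {}" using Suc.hyps(2) by (cases "A - B = {}") simp_all
  then obtain x where x: "x \<in> A" "x \<notin> B" by blast
  have "card (B - A) = card (A - B)" using fin A(2) B(2) by (simp add: card_Diff_subset_Int Int_commute)
  then have "B - A \<noteq> {}" using Suc.hyps(2) by (cases "B - A = {}") simp_all
  then obtain y where y: "y \<in> B" "y \<notin> A" by blast
  define A' where "A' = insert y (A - {x})"
  have "card A' = card A" using card.remove[OF fin(1) x(1)] fin(1) y(2) unfolding A'_def by simp
  then have A': "A' \<in> kneser_verts n k" using x y A B unfolding A'_def kneser_verts_def by auto
  have "A' - B = (A - B) - {x}" unfolding A'_def using y by auto
  then have "m = card (A' - B)" using Suc.hyps(2) x by simp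
  then have "(A',B) \<in> (common_neighbour (kneser_edges n k))\<^sup>*" using A' by (rule Suc.hyps(1))
  have "insert y A \<subseteq> {1..n}" using A(1) B(1) y(1) by blast
  then have "card ({1..n} - insert y A) = n - (k + 1)"
    using A(2) y(2) fin(1) by (simp add: card_Diff_subset)
  then have "k \<le> card ({1..n} - insert y A)" using assms(1) by simp
  then obtain Z where Z: "Z \<subseteq> {1..n} - insert y A" "card Z = k" by (rule obtain_subset_with_card_n)
  then have Z_vert: "Z \<in> kneser_verts n k" unfolding kneser_verts_def by auto
  have "A \<inter> Z = {}" "A' \<inter> Z = {}" "A \<noteq> Z" "A' \<noteq> Z"
    using Z x unfolding A'_def by auto
  then have "{A,Z} \<in> kneser_edges n k" "{A',Z} \<in> kneser_edges n k"
    using kneser_edge_iff[OF Suc.prems Z_vert] kneser_edge_iff[OF A' Z_vert] by auto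
  then have "(A,A') \<in> common_neighbour (kneser_edges n k)" unfolding common_neighbour_def by blast
  then show ?case using \<open>(A',B) \<in> _\<close> by (rule converse_rtrancl_into_rtrancl)
qed

lemma not_bipartite_kneser:
  assumes "1 \<le> k" "2 * k + 1 \<le> n"
  shows "\<not> bipartite (kneser_verts n k) (kneser_edges n k)"
proof -
  have A: "{1..k} \<in> kneser_verts n k" and B: "{k+1..2*k} \<in> kneser_verts n k"
    using assms unfolding kneser_verts_def by auto
  moreover have "{1..k} \<noteq> {k+1..2*k}" "{1..k} \<inter> {k+1..2*k} = {}" using assms by auto
  ultimately have "{{1..k}, {k+1..2*k}} \<in> kneser_edges n k" by (simp add: kneser_edge_iff)
  then show ?thesis
    by (rule not_bipartite_if_edge_in_common_neighbour_rtrancl[OF _ kneser_common_neighbour_rtrancl[OF assms(2) A B]])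
qed

lemma kneser_edge_boundary_nonempty:
  assumes "2 * k + 1 \<le> n" "X \<subseteq> kneser_verts n k" "X \<noteq> {}" "X \<noteq> kneser_verts n k"
  shows "edge_boundary (kneser_edges n k) X \<noteq> {}"
proof -
  obtain A B where AB: "A \<in> X" "B \<in> kneser_verts n k" "B \<notin> X" using assms(2-4) by blast
  then have "(A,B) \<in> (common_neighbour (kneser_edges n k))\<^sup>*"
    using assms(2) by (intro kneser_common_neighbour_rtrancl[OF assms(1)]) auto
  then show ?thesis using AB(1,3) by (intro edge_boundary_nonempty_if_common_neighbour_rtrancl)
qed

lemma bij_betw_map_disjoint_pair:
  assumes "finite N" "u \<subseteq> N" "v \<subseteq> N" "a \<subseteq> N" "b \<subseteq> N" "u \<inter> v = {}" "a \<inter> b = {}"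
    and "card u = card a" "card v = card b"
  obtains \<pi> where "bij_betw \<pi> N N" "\<pi> ` u = a" "\<pi> ` v = b"
proof -
  have fin: "finite u" "finite v" "finite a" "finite b"
    using assms(2-5) finite_subset[OF _ assms(1)] by blast+
  have "card (N - (u \<union> v)) = card (N - (a \<union> b))"
    using assms fin by (simp add: card_Diff_subset card_Un_disjoint)
  then obtain f3 where f3: "bij_betw f3 (N - (u \<union> v)) (N - (a \<union> b))"
    using finite_same_card_bij assms(1) by blast
  obtain f1 where f1: "bij_betw f1 u a" using finite_same_card_bij fin assms(8) by metis
  obtain f2 where f2: "bij_betw f2 v b" using finite_same_card_bij fin assms(9) by metis
  define \<pi> where "\<pi> x = (if x \<in> u then f1 x else if x \<in> v then f2 x else f3 x)" for x
  have "bij_betw \<pi> u a" using f1 by (rule bij_betw_cong[THEN iffD1, rotated]) (simp add: \<pi>_def)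
  moreover have "bij_betw \<pi> v b"
    using f2 assms(6) by (intro bij_betw_cong[THEN iffD1, rotated, OF f2]) (auto simp: \<pi>_def)
  moreover have "bij_betw \<pi> (N - (u \<union> v)) (N - (a \<union> b))"
    by (intro bij_betw_cong[THEN iffD1, rotated, OF f3]) (auto simp: \<pi>_def)
  ultimately have "bij_betw \<pi> ((u \<union> v) \<union> (N - (u \<union> v))) ((a \<union> b) \<union> (N - (a \<union> b)))"
    using assms(7) by (intro bij_betw_combine) auto
  moreover have "(u \<union> v) \<union> (N - (u \<union> v)) = N" "(a \<union> b) \<union> (N - (a \<union> b)) = N"
    using assms(2-5) by auto
  ultimately show ?thesis
    using that \<open>bij_betw \<pi> u a\<close> \<open>bij_betw \<pi> v b\<close> unfolding bij_betw_def by auto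
qed

lemma graph_automorphism_kneser_image:
  assumes \<pi>: "bij_betw \<pi> {1..n} {1..n}"
  shows "graph_automorphism (kneser_verts n k) (kneser_edges n k) (image \<pi>)"
proof -
  let ?V = "kneser_verts n k"
  have inj: "inj_on \<pi> {1..n}" and surj: "\<pi> ` {1..n} = {1..n}" using \<pi> unfolding bij_betw_def by auto
  have sub: "A \<subseteq> {1..n}" if "A \<in> ?V" for A using that unfolding kneser_verts_def by auto
  have img: "\<pi> ` A \<in> ?V" if A: "A \<in> ?V" for A
    using A sub[OF A] surj card_image[OF inj_on_subset[OF inj sub[OF A]]] unfolding kneser_verts_def by auto
  have inj_img: "inj_on (image \<pi>) ?V"
  proof (rule inj_onI)
    fix A B assume "A \<in> ?V" "B \<in> ?V" "\<pi> ` A = \<pi> ` B"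
    then show "A = B" using inj_on_image_eq_iff[OF inj sub sub] by blast
  qed
  moreover have "image \<pi> ` ?V = ?V"
    using img card_image[OF inj_img] by (intro card_subset_eq[OF kneser_verts_finite]) auto
  moreover have "{\<pi> ` A, \<pi> ` B} \<in> kneser_edges n k \<longleftrightarrow> {A,B} \<in> kneser_edges n k"
    if "A \<in> ?V" "B \<in> ?V" for A B
    using kneser_edge_iff[OF img img, OF that] kneser_edge_iff[OF that]
      inj_on_image_eq_iff[OF inj sub sub, OF that] inj_on_image_Int[OF inj sub sub, OF that]
    by auto
  ultimately show ?thesis unfolding graph_automorphism_def bij_betw_def by blast
qed

lemma arc_transitive_kneser: "arc_transitive (kneser_verts n k) (kneser_edges n k)"
  unfolding arc_transitive_def
proof (intro allI impI)
  fix u v a b assume uv: "{u,v} \<in> kneser_edges n k" and ab: "{a,b} \<in> kneser_edges n k"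
  have verts: "u \<in> kneser_verts n k" "v \<in> kneser_verts n k" "a \<in> kneser_verts n k" "b \<in> kneser_verts n k"
    using kneser_edge_verts uv ab by blast+
  then have "u \<inter> v = {}" "a \<inter> b = {}" using kneser_edge_iff uv ab by blast+
  obtain \<pi> where "bij_betw \<pi> {1..n} {1..n}" "\<pi> ` u = a" "\<pi> ` v = b"
    by (rule bij_betw_map_disjoint_pair[of "{1..n}" u v a b])
      (use \<open>u \<inter> v = {}\<close> \<open>a \<inter> b = {}\<close> verts in \<open>auto simp: kneser_verts_def\<close>)
  then show "\<exists>\<phi>. graph_automorphism (kneser_verts n k) (kneser_edges n k) \<phi> \<and> \<phi> u = a \<and> \<phi> v = b"
    using graph_automorphism_kneser_image by blast
qed

lemma super_edge_connected_kneser: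
  assumes "2 \<le> k" "2 * k + 1 \<le> n"
  shows "super_edge_connected (kneser_verts n k) (kneser_edges n k) ((n - k) choose k)"
proof -
  have "1 \<le> k" using assms(1) by simp
  show ?thesis
    by (rule super_edge_connected_if_arc_transitive[OF sgraph_kneser regular_kneser[OF \<open>1 \<le> k\<close>]
          kneser_degree_ge_3[OF assms] kneser_edge_boundary_nonempty[OF assms(2)] arc_transitive_kneser])
qed

lemma num_components_kneser_less_card_vertex_cut:
  assumes "2 * k + 1 \<le> n" "vertex_cut (kneser_verts n k) (kneser_edges n k) S"
  shows "num_components (kneser_verts n k - S) (kneser_edges n k) < card S"
proof (cases "2 \<le> k")
  case True
  then have "1 \<le> k" by simp
  show ?thesis
    by (rule card_components_less_card_vertex_cut[OF sgraph_kneser regular_kneser[OF \<open>1 \<le> k\<close>]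
          not_bipartite_kneser[OF \<open>1 \<le> k\<close> assms(1)] super_edge_connected_kneser[OF True assms(1)] assms(2)])
next
  case False
  then have "{A,B} \<in> kneser_edges n k"
    if "A \<in> kneser_verts n k" "B \<in> kneser_verts n k" "A \<noteq> B" for A B
    using that by (intro kneser_edge_if_k_le_1) auto
  then have "num_components (kneser_verts n k - S) (kneser_edges n k) \<le> 1"
    by (intro num_components_le_1_if_complete) auto
  then show ?thesis using assms(2) unfolding vertex_cut_def by simp
qed

theorem lemma2p13:
  fixes V :: "'a set" and E :: "'a set set" and l :: nat
  assumes "sgraph V E"
    and "regular V E l"
    and "\<not> bipartite V E"
    and "edge_connectivity V E = l"
    and "\<forall>F. edge_cut V E F \<and> card F = l \<longrightarrow> (\<exists>v\<in>V. F = incident_edges E v)"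
  shows "(\<forall>S. vertex_cut V E S \<longrightarrow> card S > num_components (V - S) E)
    \<and> (\<forall>n k::nat. 2 * k + 1 \<le> n \<longrightarrow> toughness (kneser_verts n k) (kneser_edges n k) > 1)"
proof (intro conjI allI impI)
  fix S assume "vertex_cut V E S"
  then show "card S > num_components (V - S) E"
    using card_components_less_card_vertex_cut[OF assms(1-3)]
      super_edge_connected_if_min_edge_cuts_trivial[OF assms] by blast
next
  fix n k :: nat assume "2 * k + 1 \<le> n"
  then show "toughness (kneser_verts n k) (kneser_edges n k) > 1"
    using num_components_kneser_less_card_vertex_cut by (intro toughness_gt_1 kneser_verts_finite)
qed

end
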